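(* Let $\mathcal M$ be a finite polyptych lattice over $F$ with canonical semialgebra $S_{\mathcal M}$. Restriction to $\mathcal M\subseteq S_{\mathcal M}$ gives a bijection between the set of $F_{\ge0}$-semialgebra morphisms $\tilde p:(S_{\mathcal M},\oplus,\star)\to(F\cup\{\infty\},\min,+)$ that take finite values on $S_{\mathcal M}\setminus\{\infty\}$, and the set $\mathrm{Sp}(\mathcal M)$ of points of $\mathcal M$. The inverse sends $p$ to $\tilde p(\bigoplus_{m\in S}m)=\min_{m\in S}p(m)$, $\tilde p(\infty)=\infty$.
   Context: Fix a subring $F$ with $\mathbb Z\subseteq F\subseteq\mathbb R$. A polyptych lattice of rank $r$ over $F$ is a collection $\{M_\alpha\}_{\alpha\in I}$ of free $F$-modules of rank $r$ with piecewise $F$-linear maps (continuous and $F$-linear on each cone of some complete $F$-rational fan) $\mu_{\alpha,\beta}:M_\alpha\to M_\beta$ with $\mu_{\alpha,\alpha}=\mathrm{id}$, $\mu_{\alpha,\beta}=\mu_{\beta,\alpha}^{-1}$, $\mu_{\beta,\gamma}\circ\mu_{\alpha,\beta}=\mu_{\alpha,\gamma}$; finite if $I$ is finite. Elements are classes of $\bigsqcup M_\alpha$ under $m_\alpha\sim\mu_{\alpha,\beta}(m_\alpha)$; $\pi_\alpha$ the chart maps; $\mathcal M_{\mathbb R}$ has charts $M_\alpha\otimes\mathbb R$; $m+_\alpha m':=\pi_\alpha^{-1}(\pi_\alpha(m)+\pi_\alpha(m'))$; $\lambda m:=\pi_\alpha^{-1}(\lambda\pi_\alpha(m))$ ($\lambda\ge0$).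 A point is $p:\mathcal M\to F$ with $p(m)+p(m')=\min_\alpha p(m+_\alpha m')$ and $p(\lambda m)=\lambda p(m)$ ($\lambda\in F_{\ge0}$); $\mathrm{Sp}(\mathcal M)$ is the set of points; points extend continuously to $\mathcal M_{\mathbb R}$. PL half-space: $\mathcal H_{p,a}=\{m\in\mathcal M_{\mathbb R}:p(m)\ge a\}$; $\mathrm{p\text{-}conv}_F(S)=\bigcap\{\mathcal H_{p,a}:p\in\mathrm{Sp}(\mathcal M),a\in F,S\subseteq\mathcal H_{p,a}\}$. The canonical semialgebra $S_{\mathcal M}$: the free commutative idempotent semigroup (operation $\oplus$) on elements of $\mathcal M$ modulo $\bigoplus_{m\in S}m=\bigoplus_{m\in S'}m$ whenever $S,S'\subseteq\mathcal M$ are finite with $\mathrm{p\text{-}conv}_F(S)=\mathrm{p\text{-}conv}_F(S')$, with an adjoined additive identity $\infty$; product $m\star m':=\bigoplus_{\alpha\in I}(m+_\alpha m')$, $m\star\infty=\infty$, extended distributively; $F_{\ge0}$-action $\lambda\cdot\bigoplus_{m\in S}m=\bigoplus_{m\in S}\lambda m$, $\lambda\cdot\infty=\infty$ for $\lambda>0$, $0\cdot\infty=0_{\mathcal M}$ (the element whose chart representatives are all $0$, which is the $\star$-identity). $(F\cup\{\infty\},\min,+)$ carries the usual $F_{\ge0}$-scaling. An $F_{\ge0}$-semialgebra morphism preserves $\oplus$ (to $\min$), $\star$ (to $+$), identities and the $F_{\ge0}$-action. *)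

theory Defs
  imports "HOL-Analysis.Analysis"
begin

text \<open>Chart spaces M_alpha tensor R are modelled as real^'n, the lattice M_alpha as the
  F-points of real^'n.  An element of M (or M_R) is the family of its chart
  representatives, indexed by I (value 0 outside I).\<close>

definition subring_of_reals :: "real set \<Rightarrow> bool" where
  "subring_of_reals F \<longleftrightarrow> \<int> \<subseteq> F \<and> (\<forall>x\<in>F. \<forall>y\<in>F. x + y \<in> F \<and> x * y \<in> F \<and> - x \<in> F)"

definition Fpts :: "real set \<Rightarrow> (real^'n) set" where
  "Fpts F = {v. \<forall>i. v $ i \<in> F}"

definition F_rational_cone :: "real set \<Rightarrow> (real^'n) set \<Rightarrow> bool" where
  "F_rational_cone F C \<longleftrightarrow> (\<exists>S. finite S \<and> S \<subseteq> Fpts F \<and> C = convex_cone hull S)"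

definition complete_F_fan :: "real set \<Rightarrow> (real^'n) set set \<Rightarrow> bool" where
  "complete_F_fan F \<Sigma> \<longleftrightarrow> finite \<Sigma>
     \<and> (\<forall>C\<in>\<Sigma>. F_rational_cone F C \<and> (\<forall>x\<in>C. - x \<in> C \<longrightarrow> x = 0))
     \<and> (\<forall>C\<in>\<Sigma>. \<forall>D. D \<noteq> {} \<and> D face_of C \<longrightarrow> D \<in> \<Sigma>)
     \<and> (\<forall>C\<in>\<Sigma>. \<forall>D\<in>\<Sigma>. (C \<inter> D) face_of C \<and> (C \<inter> D) face_of D)
     \<and> \<Union>\<Sigma> = UNIV"

definition piecewise_F_linear :: "real set \<Rightarrow> (real^'n \<Rightarrow> real^'n) \<Rightarrow> bool" where
  "piecewise_F_linear F f \<longleftrightarrow> continuous_on UNIV f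
     \<and> (\<exists>\<Sigma>. complete_F_fan F \<Sigma> \<and> (\<forall>C\<in>\<Sigma>. \<exists>L. linear L \<and> (\<forall>x\<in>C. f x = L x)))
     \<and> f ` Fpts F \<subseteq> Fpts F"

definition polyptych_lattice ::
  "real set \<Rightarrow> 'i set \<Rightarrow> ('i \<Rightarrow> 'i \<Rightarrow> real^'n \<Rightarrow> real^'n) \<Rightarrow> bool" where
  "polyptych_lattice F I mu \<longleftrightarrow> I \<noteq> {}
     \<and> (\<forall>a\<in>I. \<forall>b\<in>I. piecewise_F_linear F (mu a b))
     \<and> (\<forall>a\<in>I. mu a a = id)
     \<and> (\<forall>a\<in>I. \<forall>b\<in>I. mu a b \<circ> mu b a = id)
     \<and> (\<forall>a\<in>I. \<forall>b\<in>I. \<forall>c\<in>I. mu b c \<circ> mu a b = mu a c)"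

definition MR :: "'i set \<Rightarrow> ('i \<Rightarrow> 'i \<Rightarrow> real^'n \<Rightarrow> real^'n) \<Rightarrow> ('i \<Rightarrow> real^'n) set" where
  "MR I mu = {m. (\<forall>a\<in>I. \<forall>b\<in>I. m b = mu a b (m a)) \<and> (\<forall>a. a \<notin> I \<longrightarrow> m a = 0)}"

definition Mel :: "real set \<Rightarrow> 'i set \<Rightarrow> ('i \<Rightarrow> 'i \<Rightarrow> real^'n \<Rightarrow> real^'n) \<Rightarrow> ('i \<Rightarrow> real^'n) set" where
  "Mel F I mu = {m \<in> MR I mu. \<forall>a\<in>I. m a \<in> Fpts F}"

definition lift :: "'i set \<Rightarrow> ('i \<Rightarrow> 'i \<Rightarrow> real^'n \<Rightarrow> real^'n) \<Rightarrow> 'i \<Rightarrow> real^'n \<Rightarrow> ('i \<Rightarrow> real^'n)" where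
  "lift I mu a v = (\<lambda>b. if b \<in> I then mu a b v else 0)"

definition padd :: "'i set \<Rightarrow> ('i \<Rightarrow> 'i \<Rightarrow> real^'n \<Rightarrow> real^'n) \<Rightarrow> 'i \<Rightarrow> ('i \<Rightarrow> real^'n) \<Rightarrow> ('i \<Rightarrow> real^'n) \<Rightarrow> ('i \<Rightarrow> real^'n)" where
  "padd I mu a m m' = lift I mu a (m a + m' a)"

text \<open>lambda m (scaling in a chart; by positive homogeneity of the PL maps this is
  chart-independent, hence scaling every chart representative)\<close>
definition psmul :: "real \<Rightarrow> ('i \<Rightarrow> real^'n) \<Rightarrow> ('i \<Rightarrow> real^'n)" where
  "psmul c m = (\<lambda>b. c *\<^sub>R m b)"

definition zeroM :: "'i set \<Rightarrow> ('i \<Rightarrow> real^'n)" where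
  "zeroM I = (\<lambda>b. 0)"

definition Sp :: "real set \<Rightarrow> 'i set \<Rightarrow> ('i \<Rightarrow> 'i \<Rightarrow> real^'n \<Rightarrow> real^'n) \<Rightarrow> (('i \<Rightarrow> real^'n) \<Rightarrow> real) set" where
  "Sp F I mu = {p. p \<in> extensional (Mel F I mu)
     \<and> (\<forall>m\<in>Mel F I mu. p m \<in> F)
     \<and> (\<forall>m\<in>Mel F I mu. \<forall>m'\<in>Mel F I mu. p m + p m' = Min ((\<lambda>a. p (padd I mu a m m')) ` I))
     \<and> (\<forall>c\<in>F. c \<ge> 0 \<longrightarrow> (\<forall>m\<in>Mel F I mu. p (psmul c m) = c * p m))}"

text \<open>The continuous extension of a point to M_R (unique among positively homogeneous
  functions continuous in every chart).\<close>
definition pext :: "real set \<Rightarrow> 'i set \<Rightarrow> ('i \<Rightarrow> 'i \<Rightarrow> real^'n \<Rightarrow> real^'n) \<Rightarrow> (('i \<Rightarrow> real^'n) \<Rightarrow> real) \<Rightarrow> (('i \<Rightarrow> real^'n) \<Rightarrow> real)" where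
  "pext F I mu p = (THE q. q \<in> extensional (MR I mu)
     \<and> (\<forall>m\<in>Mel F I mu. q m = p m)
     \<and> (\<forall>a\<in>I. continuous_on UNIV (\<lambda>v. q (lift I mu a v)))
     \<and> (\<forall>c\<ge>0. \<forall>m\<in>MR I mu. q (psmul c m) = c * q m))"

definition PL_halfspace :: "real set \<Rightarrow> 'i set \<Rightarrow> ('i \<Rightarrow> 'i \<Rightarrow> real^'n \<Rightarrow> real^'n) \<Rightarrow> (('i \<Rightarrow> real^'n) \<Rightarrow> real) \<Rightarrow> real \<Rightarrow> ('i \<Rightarrow> real^'n) set" where
  "PL_halfspace F I mu p a = {m \<in> MR I mu. pext F I mu p m \<ge> a}"

definition pconv :: "real set \<Rightarrow> 'i set \<Rightarrow> ('i \<Rightarrow> 'i \<Rightarrow> real^'n \<Rightarrow> real^'n) \<Rightarrow> ('i \<Rightarrow> real^'n) set \<Rightarrow> ('i \<Rightarrow> real^'n) set" where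
  "pconv F I mu S = MR I mu \<inter> \<Inter>{PL_halfspace F I mu p a | p a.
      p \<in> Sp F I mu \<and> a \<in> F \<and> S \<subseteq> PL_halfspace F I mu p a}"

text \<open>Canonical semialgebra: nonempty finite subsets of M (= elements of the free commutative
  idempotent semigroup) modulo equality of p-convex hulls; None is the adjoined infinity.\<close>
definition FinM :: "real set \<Rightarrow> 'i set \<Rightarrow> ('i \<Rightarrow> 'i \<Rightarrow> real^'n \<Rightarrow> real^'n) \<Rightarrow> ('i \<Rightarrow> real^'n) set set" where
  "FinM F I mu = {S. finite S \<and> S \<noteq> {} \<and> S \<subseteq> Mel F I mu}"

definition SMrel :: "real set \<Rightarrow> 'i set \<Rightarrow> ('i \<Rightarrow> 'i \<Rightarrow> real^'n \<Rightarrow> real^'n) \<Rightarrow> (('i \<Rightarrow> real^'n) set \<times> ('i \<Rightarrow> real^'n) set) set" where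
  "SMrel F I mu = {(S, S'). S \<in> FinM F I mu \<and> S' \<in> FinM F I mu \<and> pconv F I mu S = pconv F I mu S'}"

definition SM :: "real set \<Rightarrow> 'i set \<Rightarrow> ('i \<Rightarrow> 'i \<Rightarrow> real^'n \<Rightarrow> real^'n) \<Rightarrow> ('i \<Rightarrow> real^'n) set set option set" where
  "SM F I mu = insert None (Some ` (FinM F I mu // SMrel F I mu))"

text \<open>class of the element (oplus over m in S) m\<close>
definition smcls :: "real set \<Rightarrow> 'i set \<Rightarrow> ('i \<Rightarrow> 'i \<Rightarrow> real^'n \<Rightarrow> real^'n) \<Rightarrow> ('i \<Rightarrow> real^'n) set \<Rightarrow> ('i \<Rightarrow> real^'n) set set option" where
  "smcls F I mu S = Some (SMrel F I mu `` {S})"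

definition sm_oplus :: "real set \<Rightarrow> 'i set \<Rightarrow> ('i \<Rightarrow> 'i \<Rightarrow> real^'n \<Rightarrow> real^'n) \<Rightarrow> ('i \<Rightarrow> real^'n) set set option \<Rightarrow> ('i \<Rightarrow> real^'n) set set option \<Rightarrow> ('i \<Rightarrow> real^'n) set set option" where
  "sm_oplus F I mu x y = (case x of None \<Rightarrow> y | Some X \<Rightarrow> (case y of None \<Rightarrow> x
      | Some Y \<Rightarrow> Some (SMrel F I mu `` {S \<union> T | S T. S \<in> X \<and> T \<in> Y})))"

definition sm_star :: "real set \<Rightarrow> 'i set \<Rightarrow> ('i \<Rightarrow> 'i \<Rightarrow> real^'n \<Rightarrow> real^'n) \<Rightarrow> ('i \<Rightarrow> real^'n) set set option \<Rightarrow> ('i \<Rightarrow> real^'n) set set option \<Rightarrow> ('i \<Rightarrow> real^'n) set set option" where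
  "sm_star F I mu x y = (case x of None \<Rightarrow> None | Some X \<Rightarrow> (case y of None \<Rightarrow> None
      | Some Y \<Rightarrow> Some (SMrel F I mu ``
           {{padd I mu a s t | s t a. s \<in> S \<and> t \<in> T \<and> a \<in> I} | S T. S \<in> X \<and> T \<in> Y})))"

definition sm_scale :: "real set \<Rightarrow> 'i set \<Rightarrow> ('i \<Rightarrow> 'i \<Rightarrow> real^'n \<Rightarrow> real^'n) \<Rightarrow> real \<Rightarrow> ('i \<Rightarrow> real^'n) set set option \<Rightarrow> ('i \<Rightarrow> real^'n) set set option" where
  "sm_scale F I mu c x = (case x of
      None \<Rightarrow> (if c = 0 then smcls F I mu {zeroM I} else None)
    | Some X \<Rightarrow> Some (SMrel F I mu `` {psmul c ` S | S. S \<in> X}))"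

text \<open>F_{>=0}-scaling on F union {infinity} (0 * infinity = 0).\<close>
definition tscale :: "real \<Rightarrow> ereal \<Rightarrow> ereal" where
  "tscale c x = (if c = 0 then 0 else ereal c * x)"

definition SMor :: "real set \<Rightarrow> 'i set \<Rightarrow> ('i \<Rightarrow> 'i \<Rightarrow> real^'n \<Rightarrow> real^'n) \<Rightarrow> (('i \<Rightarrow> real^'n) set set option \<Rightarrow> ereal) set" where
  "SMor F I mu = {pt. pt \<in> extensional (SM F I mu)
     \<and> (\<forall>x\<in>SM F I mu. pt x \<in> ereal ` F \<union> {\<infinity>})
     \<and> (\<forall>x\<in>SM F I mu. \<forall>y\<in>SM F I mu.
           pt (sm_oplus F I mu x y) = min (pt x) (pt y)
         \<and> pt (sm_star F I mu x y) = pt x + pt y)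
     \<and> pt None = \<infinity>
     \<and> pt (smcls F I mu {zeroM I}) = 0
     \<and> (\<forall>c\<in>F. c \<ge> 0 \<longrightarrow> (\<forall>x\<in>SM F I mu. pt (sm_scale F I mu c x) = tscale c (pt x)))
     \<and> (\<forall>x\<in>SM F I mu - {None}. pt x \<noteq> \<infinity>)}"

definition restrM :: "real set \<Rightarrow> 'i set \<Rightarrow> ('i \<Rightarrow> 'i \<Rightarrow> real^'n \<Rightarrow> real^'n) \<Rightarrow> (('i \<Rightarrow> real^'n) set set option \<Rightarrow> ereal) \<Rightarrow> (('i \<Rightarrow> real^'n) \<Rightarrow> real)" where
  "restrM F I mu pt = restrict (\<lambda>m. real_of_ereal (pt (smcls F I mu {m}))) (Mel F I mu)"

end

(* In every chart a point p is superadditive and positively F-homogeneous, hence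
   Lipschitz on the points having a positive integer multiple in F^n; these are dense, so p has a
   unique continuous positively homogeneous extension and pext p agrees with p on M.  A PL
   half-space H_{p,a} therefore contains a finite S iff a <= min_S p, so the class of S in S_M is
   determined by the minima of all points on S.  The operations oplus, star and scaling act on
   these minima as min, + and multiplication, which makes S |-> min_S p a morphism extending p;
   conversely a morphism is determined by its values on M, every class being an oplus of
   singletons. *)

theory Submission
  imports Defs
begin

section \<open>Fractional \<open>F\<close>-points\<close>

lemma continuous_on_eq_dense:
  fixes f g :: "'a::topological_space \<Rightarrow> 'b::t2_space"
  assumes "continuous_on UNIV f" "continuous_on UNIV g" "closure S = UNIV" "\<And>x. x \<in> S \<Longrightarrow> f x = g x"
  shows "f = g"
proof -
  have "closure S \<subseteq> {x. f x = g x}"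
    using assms by (intro closure_minimal closed_Collect_eq) auto
  then show ?thesis
    using assms(3) by auto
qed

text \<open>Scaling by \<open>\<bar>c\<bar>\<close> turns homogeneity on nonnegative rationals into an identity on the dense set \<open>\<rat>\<close>.\<close>
lemma homogeneous_if_homogeneous_on_Rats:
  fixes G :: "'a::real_normed_vector \<Rightarrow> real"
  assumes cont: "continuous_on UNIV G"
    and rational: "\<And>r x. r \<in> \<rat> \<Longrightarrow> r \<ge> 0 \<Longrightarrow> G (r *\<^sub>R x) = r * G x"
    and "c \<ge> 0"
  shows "G (c *\<^sub>R x) = c * G x"
proof -
  have "(\<lambda>c. G (\<bar>c\<bar> *\<^sub>R x)) = (\<lambda>c. \<bar>c\<bar> * G x)"
  proof (rule continuous_on_eq_dense[OF _ _ Rats_closure_real])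
    show "continuous_on UNIV (\<lambda>c. G (\<bar>c\<bar> *\<^sub>R x))"
      by (intro continuous_on_compose2[OF cont] continuous_intros) auto
    show "continuous_on UNIV (\<lambda>c. \<bar>c\<bar> * G x)"
      by (intro continuous_intros)
    fix c :: real
    assume "c \<in> \<rat>"
    then show "G (\<bar>c\<bar> *\<^sub>R x) = \<bar>c\<bar> * G x"
      by (intro rational) (simp_all add: Rats_abs_iff)
  qed
  from fun_cong[OF this, of c] show ?thesis
    using assms(3) by simp
qed

text \<open>For \<open>F = \<int>\<close> these are exactly the rational points.\<close>
definition Fpts_frac :: "real set \<Rightarrow> (real^'n) set" where
  "Fpts_frac F = {y. \<exists>N::nat. N > 0 \<and> real N *\<^sub>R y \<in> Fpts F}"

context
  fixes F :: "real set"
  assumes subring: "subring_of_reals F"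
begin

lemma subring_add: "x \<in> F \<Longrightarrow> y \<in> F \<Longrightarrow> x + y \<in> F"
  and subring_mult: "x \<in> F \<Longrightarrow> y \<in> F \<Longrightarrow> x * y \<in> F"
  and subring_uminus: "x \<in> F \<Longrightarrow> - x \<in> F"
  using subring by (simp_all add: subring_of_reals_def)

lemma subring_of_int: "real_of_int k \<in> F"
  using subring by (auto simp: subring_of_reals_def Ints_def)

lemma subring_of_nat: "real k \<in> F"
  using subring_of_int[of "int k"] by simp

lemma subring_zero: "0 \<in> F"
  using subring_of_nat[of 0] by simp

lemma Fpts_add: "x \<in> Fpts F \<Longrightarrow> y \<in> Fpts F \<Longrightarrow> x + y \<in> Fpts F"
  by (simp add: Fpts_def subring_add)

lemma Fpts_scaleR: "c \<in> F \<Longrightarrow> x \<in> Fpts F \<Longrightarrow> c *\<^sub>R x \<in> Fpts F"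
  by (simp add: Fpts_def subring_mult)

lemma Fpts_uminus: "x \<in> Fpts F \<Longrightarrow> - x \<in> Fpts F"
  by (simp add: Fpts_def subring_uminus)

lemma Fpts_zero: "0 \<in> Fpts F"
  by (simp add: Fpts_def subring_zero)

lemma Fpts_of_int: "(\<chi> i. real_of_int (k i)) \<in> Fpts F"
  by (simp add: Fpts_def subring_of_int)

lemma Fpts_axis: "axis i 1 \<in> Fpts F"
  using subring_of_nat[of 1] subring_zero by (simp add: Fpts_def axis_def)

lemma Fpts_subset_Fpts_frac: "Fpts F \<subseteq> Fpts_frac F"
  unfolding Fpts_frac_def by (auto intro!: exI[of _ "1::nat"])

lemma Fpts_frac_common_denominator:
  assumes "y \<in> Fpts_frac F" "z \<in> Fpts_frac F"
  obtains N :: nat where "N > 0" "real N *\<^sub>R y \<in> Fpts F" "real N *\<^sub>R z \<in> Fpts F"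
proof -
  obtain Ny Nz :: nat where y: "Ny > 0" "real Ny *\<^sub>R y \<in> Fpts F" and z: "Nz > 0" "real Nz *\<^sub>R z \<in> Fpts F"
    using assms unfolding Fpts_frac_def by blast
  have "real (Nz * Ny) *\<^sub>R y = real Nz *\<^sub>R (real Ny *\<^sub>R y)"
    "real (Nz * Ny) *\<^sub>R z = real Ny *\<^sub>R (real Nz *\<^sub>R z)"
    by (simp_all add: algebra_simps)
  moreover have "real Nz *\<^sub>R (real Ny *\<^sub>R y) \<in> Fpts F" "real Ny *\<^sub>R (real Nz *\<^sub>R z) \<in> Fpts F"
    using y(2) z(2) by (simp_all only: Fpts_scaleR subring_of_nat)
  moreover have "Nz * Ny > 0"
    using y(1) z(1) by simp
  ultimately show ?thesis
    using that by metis
qed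

lemma Fpts_frac_add:
  assumes "y \<in> Fpts_frac F" "z \<in> Fpts_frac F"
  shows "y + z \<in> Fpts_frac F"
proof -
  obtain N :: nat where "N > 0" "real N *\<^sub>R y \<in> Fpts F" "real N *\<^sub>R z \<in> Fpts F"
    using Fpts_frac_common_denominator[OF assms] .
  then have "N > 0" "real N *\<^sub>R (y + z) \<in> Fpts F"
    by (simp_all only: scaleR_add_right Fpts_add)
  then show ?thesis
    unfolding Fpts_frac_def by blast
qed

lemma Fpts_frac_uminus:
  assumes "y \<in> Fpts_frac F"
  shows "- y \<in> Fpts_frac F"
proof -
  obtain N :: nat where "N > 0" "real N *\<^sub>R y \<in> Fpts F"
    using assms unfolding Fpts_frac_def by blast
  then have "N > 0" "real N *\<^sub>R (- y) \<in> Fpts F"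
    by (simp_all only: scaleR_minus_right Fpts_uminus)
  then show ?thesis
    unfolding Fpts_frac_def by blast
qed

lemma Fpts_frac_diff: "y \<in> Fpts_frac F \<Longrightarrow> z \<in> Fpts_frac F \<Longrightarrow> z - y \<in> Fpts_frac F"
  unfolding diff_conv_add_uminus by (intro Fpts_frac_add Fpts_frac_uminus)

lemma Fpts_frac_sum:
  "finite A \<Longrightarrow> (\<And>i. i \<in> A \<Longrightarrow> v i \<in> Fpts_frac F) \<Longrightarrow> (\<Sum>i\<in>A. v i) \<in> Fpts_frac F"
  by (induction A rule: finite_induct)
    (auto intro: Fpts_frac_add Fpts_subset_Fpts_frac[THEN subsetD] Fpts_zero)

lemma Fpts_frac_scaleR_Rats:
  assumes "y \<in> Fpts_frac F" "r \<in> \<rat>" "r \<ge> 0"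
  shows "r *\<^sub>R y \<in> Fpts_frac F"
proof -
  obtain M :: nat where M: "M > 0" "real M *\<^sub>R y \<in> Fpts F"
    using assms(1) unfolding Fpts_frac_def by blast
  obtain k N :: nat where N: "N \<noteq> 0" and r: "r = real k / real N"
    using Rats_abs_nat_div_natE[OF assms(2)] assms(3) by (metis abs_of_nonneg)
  have eq: "real (N * M) *\<^sub>R (r *\<^sub>R y) = real k *\<^sub>R (real M *\<^sub>R y)"
    using N by (simp add: r)
  have "N * M > 0"
    using N M(1) by simp
  moreover have "real (N * M) *\<^sub>R (r *\<^sub>R y) \<in> Fpts F"
    unfolding eq using M(2) by (simp only: Fpts_scaleR subring_of_nat)
  ultimately show ?thesis
    unfolding Fpts_frac_def by blast
qed

lemma closure_Fpts_frac: "closure (Fpts_frac F :: (real^'n) set) = UNIV"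
proof -
  have "\<exists>y\<in>Fpts_frac F. dist y v < e" if e: "e > 0" for v :: "real^'n" and e
  proof -
    obtain N :: nat where N: "real CARD('n) / e < real N"
      using reals_Archimedean2 by blast
    then have N0: "N > 0"
      using e by (cases "N = 0") (auto simp: divide_less_0_iff)
    define y where "y = (\<chi> i. real_of_int \<lfloor>real N * v$i\<rfloor> / real N)"
    have "real N *\<^sub>R y = (\<chi> i. real_of_int \<lfloor>real N * v$i\<rfloor>)"
      using N0 by (simp add: y_def vec_eq_iff)
    then have y: "y \<in> Fpts_frac F"
      unfolding Fpts_frac_def using N0 Fpts_of_int by (intro CollectI exI[of _ N]) simp
    have "\<bar>(y - v)$i\<bar> \<le> 1 / real N" for i
    proof -
      have "(y - v)$i = (real_of_int \<lfloor>real N * v$i\<rfloor> - real N * v$i) / real N"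
        using N0 by (simp add: y_def field_simps)
      moreover have "\<bar>real_of_int \<lfloor>real N * v$i\<rfloor> - real N * v$i\<bar> \<le> 1"
        by linarith
      ultimately show ?thesis
        by (simp add: abs_divide divide_right_mono)
    qed
    then have "dist y v \<le> real CARD('n) / real N"
      using norm_le_l1_cart[of "y - v"] sum_mono[of UNIV "\<lambda>i. \<bar>(y - v)$i\<bar>" "\<lambda>_. 1 / real N"]
      by (simp add: dist_norm)
    also have "\<dots> < e"
      using N N0 e by (simp add: field_simps)
    finally show ?thesis using y by blast
  qed
  then show ?thesis
    using closure_approachable by (metis UNIV_eq_I)
qed

lemma positively_homogeneous_eq_on_Fpts:
  fixes G1 G2 :: "real^'n \<Rightarrow> real"
  assumes "continuous_on UNIV G1" "continuous_on UNIV G2"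
    and "\<And>c x. c \<ge> 0 \<Longrightarrow> G1 (c *\<^sub>R x) = c * G1 x" "\<And>c x. c \<ge> 0 \<Longrightarrow> G2 (c *\<^sub>R x) = c * G2 x"
    and "\<And>x. x \<in> Fpts F \<Longrightarrow> G1 x = G2 x"
  shows "G1 = G2"
proof (rule continuous_on_eq_dense[OF assms(1,2) closure_Fpts_frac])
  fix y :: "real^'n"
  assume "y \<in> Fpts_frac F"
  then obtain N :: nat where N: "N > 0" "real N *\<^sub>R y \<in> Fpts F"
    unfolding Fpts_frac_def by blast
  then have "real N * G1 y = real N * G2 y"
    using assms(3,4)[of "real N" y] assms(5) by simp
  then show "G1 y = G2 y"
    using N(1) by simp
qed

end

section \<open>Continuous extension of superadditive functions\<close>

locale superadditive_on_Fpts =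
  fixes F :: "real set" and f :: "real^'n \<Rightarrow> real"
  assumes subring: "subring_of_reals F"
    and superadditive: "\<And>x y. x \<in> Fpts F \<Longrightarrow> y \<in> Fpts F \<Longrightarrow> f x + f y \<le> f (x + y)"
    and homogeneous: "\<And>c x. c \<in> F \<Longrightarrow> 0 \<le> c \<Longrightarrow> x \<in> Fpts F \<Longrightarrow> f (c *\<^sub>R x) = c * f x"
begin

lemma homogeneous_nat: "x \<in> Fpts F \<Longrightarrow> f (real N *\<^sub>R x) = real N * f x"
  using homogeneous subring_of_nat[OF subring] by simp

definition frac_ext :: "real^'n \<Rightarrow> real" where
  "frac_ext y = (let N = SOME N::nat. N > 0 \<and> real N *\<^sub>R y \<in> Fpts F in f (real N *\<^sub>R y) / real N)"

lemma frac_ext_eq: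
  assumes "N > 0" "real N *\<^sub>R y \<in> Fpts F"
  shows "frac_ext y = f (real N *\<^sub>R y) / real N"
proof -
  define M where "M = (SOME N::nat. N > 0 \<and> real N *\<^sub>R y \<in> Fpts F)"
  have M: "M > 0" "real M *\<^sub>R y \<in> Fpts F"
    using someI[of "\<lambda>N::nat. N > 0 \<and> real N *\<^sub>R y \<in> Fpts F"] assms unfolding M_def by blast+
  have "real N * f (real M *\<^sub>R y) = f (real N *\<^sub>R (real M *\<^sub>R y))"
    using homogeneous_nat[OF M(2)] by simp
  also have "\<dots> = f (real M *\<^sub>R (real N *\<^sub>R y))"
    by (simp add: mult.commute)
  also have "\<dots> = real M * f (real N *\<^sub>R y)"
    using homogeneous_nat[OF assms(2)] .
  finally show ?thesis
    using M(1) assms(1) unfolding frac_ext_def M_def[symmetric] Let_def by (simp add: field_simps)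
qed

lemma frac_ext_Fpts: "x \<in> Fpts F \<Longrightarrow> frac_ext x = f x"
  using frac_ext_eq[of 1 x] by simp

lemma frac_ext_zero: "frac_ext 0 = 0"
  using frac_ext_Fpts[OF Fpts_zero[OF subring]] homogeneous[of 0 0] Fpts_zero[OF subring]
    subring_zero[OF subring] by simp

lemma frac_ext_superadditive:
  assumes "y \<in> Fpts_frac F" "z \<in> Fpts_frac F"
  shows "frac_ext y + frac_ext z \<le> frac_ext (y + z)"
proof -
  obtain N :: nat where N: "N > 0" "real N *\<^sub>R y \<in> Fpts F" "real N *\<^sub>R z \<in> Fpts F"
    using Fpts_frac_common_denominator[OF subring assms] .
  have "real N *\<^sub>R (y + z) \<in> Fpts F"
    using N by (simp only: scaleR_add_right Fpts_add[OF subring])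
  then show ?thesis
    using frac_ext_eq[OF N(1,2)] frac_ext_eq[OF N(1,3)] frac_ext_eq[OF N(1)] superadditive[OF N(2,3)] N(1)
    by (simp add: scaleR_add_right divide_right_mono flip: add_divide_distrib)
qed

lemma frac_ext_sum_superadditive:
  assumes "finite A" "\<And>i. i \<in> A \<Longrightarrow> v i \<in> Fpts_frac F"
  shows "(\<Sum>i\<in>A. frac_ext (v i)) \<le> frac_ext (\<Sum>i\<in>A. v i)"
  using assms
proof (induction A rule: finite_induct)
  case empty
  then show ?case using frac_ext_zero by simp
next
  case (insert j A)
  have "(\<Sum>i\<in>A. v i) \<in> Fpts_frac F"
    using insert by (intro Fpts_frac_sum[OF subring]) auto
  then have "frac_ext (v j) + frac_ext (\<Sum>i\<in>A. v i) \<le> frac_ext (v j + (\<Sum>i\<in>A. v i))"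
    using insert.prems by (intro frac_ext_superadditive) auto
  then show ?case
    using insert by simp
qed

lemma frac_ext_scaleR_Fpts:
  assumes "x \<in> Fpts F" "N > 0" "real N * c \<in> F" "c \<ge> 0"
  shows "frac_ext (c *\<^sub>R x) = c * f x"
proof -
  have "real N *\<^sub>R (c *\<^sub>R x) = (real N * c) *\<^sub>R x"
    by simp
  moreover have "(real N * c) *\<^sub>R x \<in> Fpts F"
    using assms(3,1) by (rule Fpts_scaleR[OF subring])
  ultimately show ?thesis
    using frac_ext_eq[of N "c *\<^sub>R x"] homogeneous[of "real N * c" x] assms by simp
qed

definition lipschitz_bound :: real where
  "lipschitz_bound = (\<Sum>i\<in>UNIV. \<bar>f (axis i 1)\<bar> + \<bar>f (- axis i 1)\<bar>)"

lemma lipschitz_bound_nonneg: "lipschitz_bound \<ge> 0"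
  unfolding lipschitz_bound_def by (intro sum_nonneg) simp

lemma frac_ext_axis_lower:
  assumes "h \<in> Fpts_frac F"
  shows "h$i *\<^sub>R axis i 1 \<in> Fpts_frac F"
    and "frac_ext (h$i *\<^sub>R axis i 1) \<ge> - ((\<bar>f (axis i 1)\<bar> + \<bar>f (- axis i 1)\<bar>) * norm h)"
proof -
  obtain N :: nat where N: "N > 0" "real N *\<^sub>R h \<in> Fpts F"
    using assms unfolding Fpts_frac_def by blast
  have hF: "real N * h$i \<in> F"
    using N(2) by (simp add: Fpts_def)
  have "(real N * h$i) *\<^sub>R axis i 1 \<in> Fpts F"
    using hF Fpts_axis[OF subring] by (rule Fpts_scaleR[OF subring])
  then show "h$i *\<^sub>R axis i 1 \<in> Fpts_frac F"
    unfolding Fpts_frac_def using N(1) by (intro CollectI exI[of _ N]) simp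
  have hi: "\<bar>h$i\<bar> \<le> norm h"
    by (rule component_le_norm_cart)
  show "frac_ext (h$i *\<^sub>R axis i 1) \<ge> - ((\<bar>f (axis i 1)\<bar> + \<bar>f (- axis i 1)\<bar>) * norm h)"
  proof (cases "h$i \<ge> 0")
    case True
    then have "frac_ext (h$i *\<^sub>R axis i 1) = h$i * f (axis i 1)"
      using frac_ext_scaleR_Fpts[OF Fpts_axis[OF subring] N(1) hF] by simp
    moreover have "\<bar>h$i * f (axis i 1)\<bar> \<le> (\<bar>f (axis i 1)\<bar> + \<bar>f (- axis i 1)\<bar>) * norm h"
      using hi by (simp add: abs_mult mult.commute mult_mono)
    ultimately show ?thesis
      by linarith
  next
    case False
    have "real N * - h$i \<in> F"
      using subring_uminus[OF subring hF] by simp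
    then have "frac_ext ((- h$i) *\<^sub>R (- axis i 1)) = - h$i * f (- axis i 1)"
      using False by (intro frac_ext_scaleR_Fpts[OF Fpts_uminus[OF subring Fpts_axis[OF subring]] N(1)]) auto
    then have "frac_ext (h$i *\<^sub>R axis i 1) = - h$i * f (- axis i 1)"
      by simp
    moreover have "\<bar>- h$i * f (- axis i 1)\<bar> \<le> (\<bar>f (axis i 1)\<bar> + \<bar>f (- axis i 1)\<bar>) * norm h"
      using hi by (simp add: abs_mult mult.commute mult_mono)
    ultimately show ?thesis
      by linarith
  qed
qed

lemma frac_ext_lower: "h \<in> Fpts_frac F \<Longrightarrow> frac_ext h \<ge> - lipschitz_bound * norm h"
proof -
  assume h: "h \<in> Fpts_frac F"
  have "- lipschitz_bound * norm h = (\<Sum>i\<in>UNIV. - ((\<bar>f (axis i 1)\<bar> + \<bar>f (- axis i 1)\<bar>) * norm h))"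
    unfolding lipschitz_bound_def by (simp add: sum_distrib_right sum_negf)
  also have "\<dots> \<le> (\<Sum>i\<in>UNIV. frac_ext (h$i *\<^sub>R axis i 1))"
    by (intro sum_mono frac_ext_axis_lower(2)[OF h])
  also have "\<dots> \<le> frac_ext (\<Sum>i\<in>UNIV. h$i *\<^sub>R axis i 1)"
    by (intro frac_ext_sum_superadditive frac_ext_axis_lower(1)[OF h]) simp
  also have "(\<Sum>i\<in>UNIV. h$i *\<^sub>R axis i 1) = h"
    using basis_expansion[of h] by (simp add: scalar_mult_eq_scaleR)
  finally show ?thesis .
qed

text \<open>\<open>frac_ext z \<ge> frac_ext y + frac_ext (z - y) \<ge> frac_ext y - lipschitz_bound * \<parallel>z - y\<parallel>\<close>.\<close>
lemma frac_ext_lipschitz: "lipschitz_bound-lipschitz_on (Fpts_frac F) frac_ext"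
proof (rule lipschitz_onI)
  have half: "frac_ext y - lipschitz_bound * dist z y \<le> frac_ext z"
    if "y \<in> Fpts_frac F" "z \<in> Fpts_frac F" for y z :: "real^'n"
  proof -
    have "frac_ext y + frac_ext (z - y) \<le> frac_ext z"
      using frac_ext_superadditive[OF that(1) Fpts_frac_diff[OF subring that]] by simp
    moreover have "frac_ext (z - y) \<ge> - lipschitz_bound * dist z y"
      using frac_ext_lower[OF Fpts_frac_diff[OF subring that]] by (simp add: dist_norm)
    ultimately show ?thesis by simp
  qed
  fix y z :: "real^'n"
  assume "y \<in> Fpts_frac F" "z \<in> Fpts_frac F"
  then show "dist (frac_ext y) (frac_ext z) \<le> lipschitz_bound * dist y z"
    using half[of y z] half[of z y] by (simp add: dist_real_def dist_commute abs_le_iff)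
qed (rule lipschitz_bound_nonneg)

lemma frac_ext_scaleR_Rats:
  assumes "y \<in> Fpts_frac F" "r \<in> \<rat>" "r \<ge> 0"
  shows "frac_ext (r *\<^sub>R y) = r * frac_ext y"
proof -
  obtain M :: nat where M: "M > 0" "real M *\<^sub>R y \<in> Fpts F"
    using assms(1) unfolding Fpts_frac_def by blast
  obtain k N :: nat where N: "N \<noteq> 0" and r: "r = real k / real N"
    using Rats_abs_nat_div_natE[OF assms(2)] assms(3) by (metis abs_of_nonneg)
  have eq: "real (N * M) *\<^sub>R (r *\<^sub>R y) = real k *\<^sub>R (real M *\<^sub>R y)"
    using N by (simp add: r)
  have "real k *\<^sub>R (real M *\<^sub>R y) \<in> Fpts F"
    using M(2) by (simp only: Fpts_scaleR[OF subring] subring_of_nat[OF subring])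
  then have "frac_ext (r *\<^sub>R y) = f (real k *\<^sub>R (real M *\<^sub>R y)) / real (N * M)"
    using frac_ext_eq[of "N * M" "r *\<^sub>R y"] N M(1) unfolding eq by simp
  also have "\<dots> = r * frac_ext y"
    using homogeneous_nat[OF M(2)] frac_ext_eq[OF M] N by (simp add: r)
  finally show ?thesis .
qed

theorem continuous_homogeneous_extension:
  obtains G where "continuous_on UNIV G" "\<And>x. x \<in> Fpts F \<Longrightarrow> G x = f x"
    "\<And>c x. c \<ge> 0 \<Longrightarrow> G (c *\<^sub>R x) = c * G x"
proof -
  obtain G where G: "lipschitz_bound-lipschitz_on UNIV G" "\<And>y. y \<in> Fpts_frac F \<Longrightarrow> G y = frac_ext y"
    using lipschitz_extend_closure[OF frac_ext_lipschitz] unfolding closure_Fpts_frac[OF subring] by metis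
  have cont: "continuous_on UNIV G"
    by (rule lipschitz_on_continuous_on[OF G(1)])
  have rational: "G (r *\<^sub>R x) = r * G x" if r: "r \<in> \<rat>" "r \<ge> 0" for r x
  proof -
    have "(\<lambda>x. G (r *\<^sub>R x)) = (\<lambda>x. r * G x)"
    proof (rule continuous_on_eq_dense[OF _ _ closure_Fpts_frac[OF subring]])
      show "continuous_on UNIV (\<lambda>x. G (r *\<^sub>R x))"
        by (intro continuous_on_compose2[OF cont] continuous_intros) auto
      show "continuous_on UNIV (\<lambda>x. r * G x)"
        by (intro continuous_intros cont)
      fix y :: "real^'n"
      assume y: "y \<in> Fpts_frac F"
      show "G (r *\<^sub>R y) = r * G y"
        using G(2)[OF y] G(2)[OF Fpts_frac_scaleR_Rats[OF subring y r]] frac_ext_scaleR_Rats[OF y r] by simp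
    qed
    then show ?thesis
      by (rule fun_cong)
  qed
  have homogeneous_G: "G (c *\<^sub>R x) = c * G x" if "c \<ge> 0" for c x
    using cont rational that by (rule homogeneous_if_homogeneous_on_Rats)
  have "G x = f x" if "x \<in> Fpts F" for x
    using G(2)[OF Fpts_subset_Fpts_frac[OF subring, THEN subsetD, OF that]] frac_ext_Fpts[OF that] by simp
  then show ?thesis
    using that[OF cont _ homogeneous_G] by blast
qed

end

section \<open>Charts and points of a finite polyptych lattice\<close>

locale finite_polyptych_lattice =
  fixes F :: "real set" and I :: "'i set" and mu :: "'i \<Rightarrow> 'i \<Rightarrow> real^'n \<Rightarrow> real^'n"
  assumes subring: "subring_of_reals F"
    and polyptych: "polyptych_lattice F I mu"
    and finite_I: "finite I"
begin

lemma I_nonempty: "I \<noteq> {}"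
  using polyptych by (simp add: polyptych_lattice_def)

lemma mu_self: "a \<in> I \<Longrightarrow> mu a a = id"
  using polyptych by (simp add: polyptych_lattice_def)

lemma mu_comp: "a \<in> I \<Longrightarrow> b \<in> I \<Longrightarrow> c \<in> I \<Longrightarrow> mu b c (mu a b v) = mu a c v"
  using polyptych unfolding polyptych_lattice_def by (metis comp_apply)

lemma mu_piecewise_linear: "a \<in> I \<Longrightarrow> b \<in> I \<Longrightarrow> piecewise_F_linear F (mu a b)"
  using polyptych by (simp add: polyptych_lattice_def)

lemma mu_continuous: "a \<in> I \<Longrightarrow> b \<in> I \<Longrightarrow> continuous_on UNIV (mu a b)"
  using mu_piecewise_linear by (simp add: piecewise_F_linear_def)

lemma mu_Fpts: "a \<in> I \<Longrightarrow> b \<in> I \<Longrightarrow> v \<in> Fpts F \<Longrightarrow> mu a b v \<in> Fpts F"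
  using mu_piecewise_linear unfolding piecewise_F_linear_def by blast

text \<open>The cones of a fan are conic, so a map that is linear on each cone commutes with nonnegative scaling.\<close>
lemma mu_scaleR:
  assumes "a \<in> I" "b \<in> I" "c \<ge> 0"
  shows "mu a b (c *\<^sub>R v) = c *\<^sub>R mu a b v"
proof -
  obtain \<Sigma> where \<Sigma>: "complete_F_fan F \<Sigma>" "\<forall>C\<in>\<Sigma>. \<exists>L. linear L \<and> (\<forall>x\<in>C. mu a b x = L x)"
    using mu_piecewise_linear[OF assms(1,2)] by (auto simp: piecewise_F_linear_def)
  then obtain C where C: "C \<in> \<Sigma>" "v \<in> C"
    unfolding complete_F_fan_def by (metis UNIV_I UnionE)
  then obtain L where L: "linear L" "\<forall>x\<in>C. mu a b x = L x"
    using \<Sigma> by blast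
  obtain T where "C = convex_cone hull T"
    using \<Sigma>(1) C(1) by (auto simp: complete_F_fan_def F_rational_cone_def)
  then have "conic C"
    using convex_cone_convex_cone_hull[of T] by (simp add: convex_cone_def)
  then have "c *\<^sub>R v \<in> C"
    using C(2) assms(3) by (simp add: conic_def)
  then show ?thesis
    using L C(2) by (simp add: linear_scale)
qed

lemma mu_zero: "a \<in> I \<Longrightarrow> b \<in> I \<Longrightarrow> mu a b 0 = 0"
  using mu_scaleR[of a b 0 0] by simp

lemma MR_chart: "m \<in> MR I mu \<Longrightarrow> a \<in> I \<Longrightarrow> b \<in> I \<Longrightarrow> m b = mu a b (m a)"
  unfolding MR_def by blast

lemma MR_outside: "m \<in> MR I mu \<Longrightarrow> a \<notin> I \<Longrightarrow> m a = 0"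
  unfolding MR_def by blast

lemma lift_MR: "a \<in> I \<Longrightarrow> lift I mu a v \<in> MR I mu"
  by (simp add: MR_def lift_def mu_comp)

lemma lift_apply: "a \<in> I \<Longrightarrow> b \<in> I \<Longrightarrow> lift I mu a v b = mu a b v"
  by (simp add: lift_def)

lemma lift_Mel: "a \<in> I \<Longrightarrow> v \<in> Fpts F \<Longrightarrow> lift I mu a v \<in> Mel F I mu"
  by (simp add: Mel_def lift_MR lift_apply mu_Fpts)

lemma lift_apply_self: "a \<in> I \<Longrightarrow> lift I mu a v a = v"
  by (simp add: lift_def mu_self)

lemma lift_chart:
  assumes "m \<in> MR I mu" "a \<in> I"
  shows "lift I mu a (m a) = m"
  using MR_chart[OF assms] MR_outside[OF assms(1)] by (auto simp: lift_def)

lemma psmul_lift: "a \<in> I \<Longrightarrow> c \<ge> 0 \<Longrightarrow> psmul c (lift I mu a v) = lift I mu a (c *\<^sub>R v)"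
  by (auto simp: psmul_def lift_def mu_scaleR)

lemma padd_lift: "a \<in> I \<Longrightarrow> padd I mu a (lift I mu a x) (lift I mu a y) = lift I mu a (x + y)"
  by (simp add: padd_def lift_apply_self)

lemma psmul_MR:
  assumes "m \<in> MR I mu" "c \<ge> 0"
  shows "psmul c m \<in> MR I mu"
  unfolding MR_def psmul_def mem_Collect_eq
proof (intro conjI ballI allI impI)
  fix a b :: 'i
  assume ab: "a \<in> I" "b \<in> I"
  show "c *\<^sub>R m b = mu a b (c *\<^sub>R m a)"
    by (simp only: MR_chart[OF assms(1) ab] mu_scaleR[OF ab assms(2)])
next
  fix a :: 'i
  assume "a \<notin> I"
  then show "c *\<^sub>R m a = 0"
    using MR_outside[OF assms(1)] by simp
qed

lemma psmul_Mel: "m \<in> Mel F I mu \<Longrightarrow> c \<in> F \<Longrightarrow> c \<ge> 0 \<Longrightarrow> psmul c m \<in> Mel F I mu"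
  using psmul_MR unfolding Mel_def by (simp add: psmul_def Fpts_scaleR[OF subring])

lemma padd_Mel: "m \<in> Mel F I mu \<Longrightarrow> m' \<in> Mel F I mu \<Longrightarrow> a \<in> I \<Longrightarrow> padd I mu a m m' \<in> Mel F I mu"
  unfolding padd_def by (intro lift_Mel Fpts_add[OF subring]) (auto simp: Mel_def)

lemma zeroM_Mel: "zeroM I \<in> Mel F I mu"
  by (auto simp: Mel_def MR_def zeroM_def mu_zero Fpts_zero[OF subring])

lemma psmul_zero: "psmul 0 m = zeroM I"
  by (simp add: psmul_def zeroM_def)

lemma point_values:
  assumes "p \<in> Sp F I mu" "m \<in> Mel F I mu"
  shows "p m \<in> F"
  using assms by (simp add: Sp_def)

lemma point_add:
  assumes "p \<in> Sp F I mu" "m \<in> Mel F I mu" "m' \<in> Mel F I mu"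
  shows "p m + p m' = Min ((\<lambda>a. p (padd I mu a m m')) ` I)"
  using assms by (simp add: Sp_def)

lemma point_scale:
  assumes "p \<in> Sp F I mu" "c \<in> F" "c \<ge> 0" "m \<in> Mel F I mu"
  shows "p (psmul c m) = c * p m"
  using assms by (simp add: Sp_def)

lemma point_zero: "p \<in> Sp F I mu \<Longrightarrow> p (zeroM I) = 0"
  using point_scale[of p 0 "zeroM I"] zeroM_Mel subring_zero[OF subring] by (simp add: psmul_zero)

text \<open>\<open>p m + p m'\<close> is the minimum over all charts \<open>\<alpha>\<close> of \<open>p (m +\<^sub>\<alpha> m')\<close>.\<close>
lemma point_in_chart_superadditive:
  assumes p: "p \<in> Sp F I mu" and a: "a \<in> I"
  shows "superadditive_on_Fpts F (\<lambda>v. p (lift I mu a v))"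
proof
  fix x y :: "real^'n"
  assume xy: "x \<in> Fpts F" "y \<in> Fpts F"
  have "p (lift I mu a x) + p (lift I mu a y) = Min ((\<lambda>b. p (padd I mu b (lift I mu a x) (lift I mu a y))) ` I)"
    using point_add[OF p lift_Mel[OF a xy(1)] lift_Mel[OF a xy(2)]] .
  also have "\<dots> \<le> p (padd I mu a (lift I mu a x) (lift I mu a y))"
    using finite_I a by (intro Min_le) auto
  finally show "p (lift I mu a x) + p (lift I mu a y) \<le> p (lift I mu a (x + y))"
    by (simp add: padd_lift a)
next
  fix c and x :: "real^'n"
  assume "c \<in> F" "0 \<le> c" "x \<in> Fpts F"
  then show "p (lift I mu a (c *\<^sub>R x)) = c * p (lift I mu a x)"
    using point_scale[OF p _ _ lift_Mel[OF a]] by (simp add: psmul_lift a)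
qed (rule subring)

definition continuous_extension :: "(('i \<Rightarrow> real^'n) \<Rightarrow> real) \<Rightarrow> (('i \<Rightarrow> real^'n) \<Rightarrow> real) \<Rightarrow> bool" where
  "continuous_extension p q \<longleftrightarrow> q \<in> extensional (MR I mu)
     \<and> (\<forall>m\<in>Mel F I mu. q m = p m)
     \<and> (\<forall>a\<in>I. continuous_on UNIV (\<lambda>v. q (lift I mu a v)))
     \<and> (\<forall>c\<ge>0. \<forall>m\<in>MR I mu. q (psmul c m) = c * q m)"

lemma continuous_extension_exists:
  assumes p: "p \<in> Sp F I mu" and a: "a \<in> I"
  shows "\<exists>q. continuous_extension p q"
proof -
  obtain G where G: "continuous_on UNIV G" "\<And>x. x \<in> Fpts F \<Longrightarrow> G x = p (lift I mu a x)"
    "\<And>c x. c \<ge> 0 \<Longrightarrow> G (c *\<^sub>R x) = c * G x"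
    using superadditive_on_Fpts.continuous_homogeneous_extension[OF point_in_chart_superadditive[OF p a]]
    by blast
  have "continuous_extension p (restrict (\<lambda>m. G (m a)) (MR I mu))"
    unfolding continuous_extension_def
  proof (intro conjI ballI allI impI)
    fix m :: "'i \<Rightarrow> real^'n"
    assume "m \<in> Mel F I mu"
    then show "restrict (\<lambda>m. G (m a)) (MR I mu) m = p m"
      using G(2) a lift_chart by (auto simp: Mel_def)
  next
    fix b :: 'i
    assume b: "b \<in> I"
    have "continuous_on UNIV (\<lambda>v. G (mu b a v))"
      using continuous_on_compose2[OF G(1) mu_continuous[OF b a]] by simp
    then show "continuous_on UNIV (\<lambda>v. restrict (\<lambda>m. G (m a)) (MR I mu) (lift I mu b v))"
      by (simp add: lift_MR b lift_apply a)
  next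
    fix c :: real and m :: "'i \<Rightarrow> real^'n"
    assume "0 \<le> c" "m \<in> MR I mu"
    then show "restrict (\<lambda>m. G (m a)) (MR I mu) (psmul c m) = c * restrict (\<lambda>m. G (m a)) (MR I mu) m"
      using G(3) psmul_MR by (simp add: psmul_def)
  qed simp
  then show ?thesis
    by blast
qed

lemma continuous_extension_unique:
  assumes p: "p \<in> Sp F I mu" and q: "continuous_extension p q" "continuous_extension p q'"
  shows "q = q'"
proof
  obtain a where a: "a \<in> I"
    using I_nonempty by blast
  have chart: "continuous_on UNIV (\<lambda>v. r (lift I mu a v))"
    "\<And>c v. c \<ge> 0 \<Longrightarrow> r (lift I mu a (c *\<^sub>R v)) = c * r (lift I mu a v)"
    "\<And>v. v \<in> Fpts F \<Longrightarrow> r (lift I mu a v) = p (lift I mu a v)"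
    if "continuous_extension p r" for r
    using that a lift_MR[OF a] lift_Mel[OF a] by (simp_all add: continuous_extension_def flip: psmul_lift[OF a])
  have charts_eq: "(\<lambda>v. q (lift I mu a v)) = (\<lambda>v. q' (lift I mu a v))"
    using chart[OF q(1)] chart[OF q(2)] by (intro positively_homogeneous_eq_on_Fpts[OF subring]) simp_all
  fix m :: "'i \<Rightarrow> real^'n"
  show "q m = q' m"
  proof (cases "m \<in> MR I mu")
    case True
    then show ?thesis
      using fun_cong[OF charts_eq, of "m a"] lift_chart[OF True a] by simp
  next
    case False
    then show ?thesis
      using q by (simp add: continuous_extension_def extensional_def)
  qed
qed

lemma pext_point:
  assumes "p \<in> Sp F I mu" "m \<in> Mel F I mu"
  shows "pext F I mu p m = p m"
proof -
  obtain a where "a \<in> I"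
    using I_nonempty by blast
  then obtain q where q: "continuous_extension p q"
    using continuous_extension_exists[OF assms(1)] by blast
  have "pext F I mu p = (THE q. continuous_extension p q)"
    unfolding pext_def continuous_extension_def ..
  also have "\<dots> = q"
    using q continuous_extension_unique[OF assms(1) _ q] by (rule the_equality)
  finally have "pext F I mu p = q" .
  then show ?thesis
    using q assms(2) by (simp add: continuous_extension_def)
qed

section \<open>Classes of the canonical semialgebra\<close>

lemma FinMD:
  assumes "S \<in> FinM F I mu"
  shows "finite S" "S \<noteq> {}" "S \<subseteq> Mel F I mu"
  using assms by (simp_all add: FinM_def)

lemma singleton_FinM: "m \<in> Mel F I mu \<Longrightarrow> {m} \<in> FinM F I mu"
  by (simp add: FinM_def)

lemma Un_FinM: "S \<in> FinM F I mu \<Longrightarrow> T \<in> FinM F I mu \<Longrightarrow> S \<union> T \<in> FinM F I mu"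
  by (simp add: FinM_def)

lemma psmul_image_FinM: "S \<in> FinM F I mu \<Longrightarrow> c \<in> F \<Longrightarrow> c \<ge> 0 \<Longrightarrow> psmul c ` S \<in> FinM F I mu"
  unfolding FinM_def using psmul_Mel by auto

lemma Min_point_in_F:
  assumes "p \<in> Sp F I mu" "S \<in> FinM F I mu"
  shows "Min (p ` S) \<in> F"
proof -
  have "Min (p ` S) \<in> p ` S"
    using FinMD[OF assms(2)] by (intro Min_in) auto
  then obtain m where "m \<in> S" "Min (p ` S) = p m"
    by auto
  then show ?thesis
    using point_values[OF assms(1)] FinMD(3)[OF assms(2)] by auto
qed

lemma subset_PL_halfspace_iff:
  assumes p: "p \<in> Sp F I mu" and S: "S \<in> FinM F I mu"
  shows "S \<subseteq> PL_halfspace F I mu p a \<longleftrightarrow> a \<le> Min (p ` S)"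
proof -
  have "S \<subseteq> PL_halfspace F I mu p a \<longleftrightarrow> (\<forall>m\<in>S. a \<le> p m)"
  proof -
    have "\<forall>m\<in>S. m \<in> MR I mu \<and> pext F I mu p m = p m"
      using FinMD(3)[OF S] pext_point[OF p] by (auto simp: Mel_def)
    then show ?thesis
      unfolding PL_halfspace_def by auto
  qed
  also have "\<dots> \<longleftrightarrow> a \<le> Min (p ` S)"
    using FinMD[OF S] by (simp add: Min_ge_iff)
  finally show ?thesis .
qed

text \<open>The half-spaces containing \<open>S\<close> are exactly the \<open>\<H>\<^sub>p\<^sub>,\<^sub>a\<close> with \<open>a \<le> min\<^sub>S p\<close>.\<close>
lemma pconv_eq_iff:
  assumes S: "S \<in> FinM F I mu" and S': "S' \<in> FinM F I mu"
  shows "pconv F I mu S = pconv F I mu S' \<longleftrightarrow> (\<forall>p\<in>Sp F I mu. Min (p ` S) = Min (p ` S'))"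
proof
  assume eq: "pconv F I mu S = pconv F I mu S'"
  have le: "Min (p ` T') \<le> Min (p ` T)"
    if p: "p \<in> Sp F I mu" and T: "T \<in> FinM F I mu" "T' \<in> FinM F I mu"
      and e: "pconv F I mu T = pconv F I mu T'" for p T T'
  proof -
    have "T \<subseteq> pconv F I mu T"
      using FinMD(3)[OF T(1)] by (auto simp: pconv_def Mel_def)
    also have "\<dots> \<subseteq> PL_halfspace F I mu p (Min (p ` T'))"
    proof -
      have "PL_halfspace F I mu p (Min (p ` T')) \<in>
          {PL_halfspace F I mu p a |p a. p \<in> Sp F I mu \<and> a \<in> F \<and> T' \<subseteq> PL_halfspace F I mu p a}"
        using p Min_point_in_F[OF p T(2)] subset_PL_halfspace_iff[OF p T(2)] by auto
      from Inter_lower[OF this] have "pconv F I mu T' \<subseteq> PL_halfspace F I mu p (Min (p ` T'))"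
        unfolding pconv_def by auto
      then show ?thesis
        using e by simp
    qed
    finally show ?thesis
      using subset_PL_halfspace_iff[OF p T(1)] by simp
  qed
  show "\<forall>p\<in>Sp F I mu. Min (p ` S) = Min (p ` S')"
    using le[OF _ S S' eq] le[OF _ S' S eq[symmetric]] by (auto intro: antisym)
next
  assume "\<forall>p\<in>Sp F I mu. Min (p ` S) = Min (p ` S')"
  then have "p \<in> Sp F I mu \<and> a \<in> F \<and> S \<subseteq> PL_halfspace F I mu p a \<longleftrightarrow>
      p \<in> Sp F I mu \<and> a \<in> F \<and> S' \<subseteq> PL_halfspace F I mu p a" for p a
    using subset_PL_halfspace_iff[OF _ S] subset_PL_halfspace_iff[OF _ S'] by metis
  then show "pconv F I mu S = pconv F I mu S'"
    unfolding pconv_def by simp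
qed

definition min_profile :: "('i \<Rightarrow> real^'n) set \<Rightarrow> (('i \<Rightarrow> real^'n) \<Rightarrow> real) \<Rightarrow> real" where
  "min_profile S = (\<lambda>p. if p \<in> Sp F I mu then Min (p ` S) else 0)"

lemma min_profile_point: "p \<in> Sp F I mu \<Longrightarrow> min_profile S p = Min (p ` S)"
  by (simp add: min_profile_def)

lemma SMrel_iff:
  "(S, S') \<in> SMrel F I mu \<longleftrightarrow> S \<in> FinM F I mu \<and> S' \<in> FinM F I mu \<and> min_profile S = min_profile S'"
  using pconv_eq_iff[of S S'] by (auto simp: SMrel_def min_profile_def fun_eq_iff)

lemma smcls_refl: "S \<in> FinM F I mu \<Longrightarrow> S \<in> SMrel F I mu `` {S}"
  by (simp add: SMrel_iff)

lemma SMrel_Image_eq: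
  assumes "S \<in> Z" "\<And>U. U \<in> Z \<Longrightarrow> U \<in> FinM F I mu \<and> min_profile U = min_profile S"
  shows "SMrel F I mu `` Z = SMrel F I mu `` {S}"
proof (intro equalityI subsetI)
  fix W
  assume "W \<in> SMrel F I mu `` Z"
  then obtain U where "U \<in> Z" "(U, W) \<in> SMrel F I mu"
    by auto
  then show "W \<in> SMrel F I mu `` {S}"
    using assms(2)[of U] assms(2)[OF assms(1)] by (simp add: SMrel_iff)
next
  fix W
  assume "W \<in> SMrel F I mu `` {S}"
  then show "W \<in> SMrel F I mu `` Z"
    using assms(1) by auto
qed

lemma SMrel_Image_unop:
  assumes "S \<in> FinM F I mu"
    and "\<And>S. S \<in> FinM F I mu \<Longrightarrow> f S \<in> FinM F I mu"
    and "\<And>S S'. S \<in> FinM F I mu \<Longrightarrow> S' \<in> FinM F I mu \<Longrightarrow> min_profile S = min_profile S'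
      \<Longrightarrow> min_profile (f S) = min_profile (f S')"
  shows "SMrel F I mu `` {f S' | S'. S' \<in> SMrel F I mu `` {S}} = SMrel F I mu `` {f S}"
proof (rule SMrel_Image_eq)
  show "f S \<in> {f S' | S'. S' \<in> SMrel F I mu `` {S}}"
    using smcls_refl[OF assms(1)] by auto
  fix U
  assume "U \<in> {f S' | S'. S' \<in> SMrel F I mu `` {S}}"
  then obtain S' where "U = f S'" "(S, S') \<in> SMrel F I mu"
    by auto
  then show "U \<in> FinM F I mu \<and> min_profile U = min_profile (f S)"
    using assms(2)[of S'] assms(3)[of S S'] by (simp add: SMrel_iff)
qed

lemma SMrel_Image_binop:
  assumes "S \<in> FinM F I mu" "T \<in> FinM F I mu"
    and "\<And>S T. S \<in> FinM F I mu \<Longrightarrow> T \<in> FinM F I mu \<Longrightarrow> f S T \<in> FinM F I mu"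
    and "\<And>S S' T T'. S \<in> FinM F I mu \<Longrightarrow> S' \<in> FinM F I mu \<Longrightarrow> T \<in> FinM F I mu \<Longrightarrow> T' \<in> FinM F I mu
      \<Longrightarrow> min_profile S = min_profile S' \<Longrightarrow> min_profile T = min_profile T'
      \<Longrightarrow> min_profile (f S T) = min_profile (f S' T')"
  shows "SMrel F I mu `` {f S' T' | S' T'. S' \<in> SMrel F I mu `` {S} \<and> T' \<in> SMrel F I mu `` {T}}
    = SMrel F I mu `` {f S T}"
proof (rule SMrel_Image_eq)
  show "f S T \<in> {f S' T' | S' T'. S' \<in> SMrel F I mu `` {S} \<and> T' \<in> SMrel F I mu `` {T}}"
    using smcls_refl[OF assms(1)] smcls_refl[OF assms(2)] by auto
  fix U
  assume "U \<in> {f S' T' | S' T'. S' \<in> SMrel F I mu `` {S} \<and> T' \<in> SMrel F I mu `` {T}}"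
  then obtain S' T' where "U = f S' T'" "(S, S') \<in> SMrel F I mu" "(T, T') \<in> SMrel F I mu"
    by auto
  then show "U \<in> FinM F I mu \<and> min_profile U = min_profile (f S T)"
    using assms(3)[of S' T'] assms(4)[of S S' T T'] by (simp add: SMrel_iff)
qed

lemma min_profile_Un:
  assumes "S \<in> FinM F I mu" "T \<in> FinM F I mu"
  shows "min_profile (S \<union> T) = (\<lambda>p. min (min_profile S p) (min_profile T p))"
  using FinMD[OF assms(1)] FinMD[OF assms(2)] by (simp add: min_profile_def image_Un Min_Un fun_eq_iff)

lemma sm_oplus_smcls:
  assumes S: "S \<in> FinM F I mu" and T: "T \<in> FinM F I mu"
  shows "sm_oplus F I mu (smcls F I mu S) (smcls F I mu T) = smcls F I mu (S \<union> T)"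
proof -
  have "SMrel F I mu `` {S' \<union> T' |S' T'. S' \<in> SMrel F I mu `` {S} \<and> T' \<in> SMrel F I mu `` {T}}
      = SMrel F I mu `` {S \<union> T}"
    using S T by (rule SMrel_Image_binop) (simp_all add: Un_FinM min_profile_Un)
  then show ?thesis
    by (simp add: sm_oplus_def smcls_def)
qed

definition padd_set :: "('i \<Rightarrow> real^'n) set \<Rightarrow> ('i \<Rightarrow> real^'n) set \<Rightarrow> ('i \<Rightarrow> real^'n) set" where
  "padd_set S T = {padd I mu a s t | s t a. s \<in> S \<and> t \<in> T \<and> a \<in> I}"

lemma padd_set_FinM:
  assumes "S \<in> FinM F I mu" "T \<in> FinM F I mu"
  shows "padd_set S T \<in> FinM F I mu"
proof -
  have "padd_set S T = (\<lambda>(s, t, a). padd I mu a s t) ` (S \<times> T \<times> I)"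
    by (auto simp: padd_set_def image_def)
  then show ?thesis
    using FinMD[OF assms(1)] FinMD[OF assms(2)] finite_I I_nonempty
    by (auto simp: FinM_def intro!: padd_Mel)
qed

lemma Min_padd_set:
  assumes p: "p \<in> Sp F I mu" and S: "S \<in> FinM F I mu" and T: "T \<in> FinM F I mu"
  shows "Min (p ` padd_set S T) = Min (p ` S) + Min (p ` T)"
proof (rule Min_eqI)
  show "finite (p ` padd_set S T)"
    using FinMD(1)[OF padd_set_FinM[OF S T]] by simp
  have padd: "p s + p t = Min ((\<lambda>a. p (padd I mu a s t)) ` I)" if "s \<in> S" "t \<in> T" for s t
    using point_add[OF p] FinMD(3)[OF S] FinMD(3)[OF T] that by blast
  show "Min (p ` S) + Min (p ` T) \<le> y" if "y \<in> p ` padd_set S T" for y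
  proof -
    from that obtain s t a where y: "s \<in> S" "t \<in> T" "a \<in> I" "y = p (padd I mu a s t)"
      by (auto simp: padd_set_def)
    have "p s + p t \<le> y"
      using padd[OF y(1,2)] finite_I y by simp
    moreover have "Min (p ` S) \<le> p s" "Min (p ` T) \<le> p t"
      using FinMD(1)[OF S] FinMD(1)[OF T] y by auto
    ultimately show ?thesis
      by linarith
  qed
  have "Min (p ` S) \<in> p ` S" "Min (p ` T) \<in> p ` T"
    using FinMD[OF S] FinMD[OF T] by (auto intro!: Min_in)
  then obtain s t where s: "s \<in> S" "p s = Min (p ` S)" and t: "t \<in> T" "p t = Min (p ` T)"
    by (metis imageE)
  have "Min ((\<lambda>a. p (padd I mu a s t)) ` I) \<in> (\<lambda>a. p (padd I mu a s t)) ` I"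
    using finite_I I_nonempty by (intro Min_in) auto
  then obtain a where a: "Min ((\<lambda>a. p (padd I mu a s t)) ` I) = p (padd I mu a s t)" "a \<in> I"
    by (rule imageE)
  have "padd I mu a s t \<in> padd_set S T"
    using s(1) t(1) a(2) by (auto simp: padd_set_def)
  moreover have "Min (p ` S) + Min (p ` T) = p (padd I mu a s t)"
    using a(1) padd[OF s(1) t(1)] s(2) t(2) by simp
  ultimately show "Min (p ` S) + Min (p ` T) \<in> p ` padd_set S T"
    by simp
qed

lemma sm_star_smcls:
  assumes S: "S \<in> FinM F I mu" and T: "T \<in> FinM F I mu"
  shows "sm_star F I mu (smcls F I mu S) (smcls F I mu T) = smcls F I mu (padd_set S T)"
proof -
  have profile: "min_profile (padd_set S' T') = (\<lambda>p. min_profile S' p + min_profile T' p)"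
    if "S' \<in> FinM F I mu" "T' \<in> FinM F I mu" for S' T'
    using Min_padd_set[OF _ that] by (auto simp: min_profile_def)
  have "SMrel F I mu `` {padd_set S' T' |S' T'. S' \<in> SMrel F I mu `` {S} \<and> T' \<in> SMrel F I mu `` {T}}
      = SMrel F I mu `` {padd_set S T}"
    using S T by (rule SMrel_Image_binop) (simp_all add: padd_set_FinM profile)
  then show ?thesis
    by (simp add: sm_star_def smcls_def padd_set_def)
qed

lemma Min_psmul_image:
  assumes p: "p \<in> Sp F I mu" and S: "S \<in> FinM F I mu" and c: "c \<in> F" "c \<ge> 0"
  shows "Min (p ` psmul c ` S) = c * Min (p ` S)"
proof -
  have "p ` psmul c ` S = (\<lambda>x. c * x) ` p ` S"
    unfolding image_image using point_scale[OF p c] FinMD(3)[OF S] by (intro image_cong) auto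
  moreover have "mono (\<lambda>x. c * x)"
    using c by (simp add: mono_def mult_left_mono)
  ultimately show ?thesis
    using mono_Min_commute[of "\<lambda>x. c * x" "p ` S"] FinMD[OF S] by simp
qed

lemma sm_scale_smcls:
  assumes S: "S \<in> FinM F I mu" and c: "c \<in> F" "c \<ge> 0"
  shows "sm_scale F I mu c (smcls F I mu S) = smcls F I mu (psmul c ` S)"
proof -
  have profile: "min_profile (psmul c ` S') = (\<lambda>p. c * min_profile S' p)" if "S' \<in> FinM F I mu" for S'
    using Min_psmul_image[OF _ that c] by (auto simp: min_profile_def)
  have "SMrel F I mu `` {psmul c ` S' |S'. S' \<in> SMrel F I mu `` {S}} = SMrel F I mu `` {psmul c ` S}"
    using S by (rule SMrel_Image_unop) (simp_all add: psmul_image_FinM c profile)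
  then show ?thesis
    by (simp add: sm_scale_def smcls_def)
qed

lemma smcls_SM: "S \<in> FinM F I mu \<Longrightarrow> smcls F I mu S \<in> SM F I mu"
  by (simp add: SM_def smcls_def quotientI)

lemma SM_cases [consumes 1, case_names infinity smcls]:
  assumes "x \<in> SM F I mu"
  obtains "x = None" | S where "S \<in> FinM F I mu" "x = smcls F I mu S"
  using assms by (auto simp: SM_def smcls_def elim!: quotientE)

section \<open>Morphisms and points\<close>

lemma SMorD:
  assumes "pt \<in> SMor F I mu"
  shows "pt \<in> extensional (SM F I mu)"
    and "x \<in> SM F I mu \<Longrightarrow> pt x \<in> ereal ` F \<union> {\<infinity>}"
    and "x \<in> SM F I mu \<Longrightarrow> y \<in> SM F I mu \<Longrightarrow> pt (sm_oplus F I mu x y) = min (pt x) (pt y)"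
    and "x \<in> SM F I mu \<Longrightarrow> y \<in> SM F I mu \<Longrightarrow> pt (sm_star F I mu x y) = pt x + pt y"
    and "pt None = \<infinity>"
    and "c \<in> F \<Longrightarrow> c \<ge> 0 \<Longrightarrow> x \<in> SM F I mu \<Longrightarrow> pt (sm_scale F I mu c x) = tscale c (pt x)"
    and "x \<in> SM F I mu \<Longrightarrow> x \<noteq> None \<Longrightarrow> pt x \<noteq> \<infinity>"
  using assms unfolding SMor_def by auto

lemma smcls_not_None: "smcls F I mu S \<noteq> None"
  by (simp add: smcls_def)

lemma sm_oplus_None [simp]: "sm_oplus F I mu None y = y" "sm_oplus F I mu x None = x"
  by (simp_all add: sm_oplus_def split: option.split)

lemma sm_star_None [simp]: "sm_star F I mu None y = None" "sm_star F I mu x None = None"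
  by (simp_all add: sm_star_def split: option.split)

lemma SMor_smcls_singleton:
  assumes pt: "pt \<in> SMor F I mu" and m: "m \<in> Mel F I mu"
  shows "pt (smcls F I mu {m}) = ereal (restrM F I mu pt m)" "restrM F I mu pt m \<in> F"
proof -
  have x: "smcls F I mu {m} \<in> SM F I mu"
    by (rule smcls_SM[OF singleton_FinM[OF m]])
  have "pt (smcls F I mu {m}) \<in> ereal ` F"
    using SMorD(2)[OF pt x] SMorD(7)[OF pt x smcls_not_None] by auto
  then show "pt (smcls F I mu {m}) = ereal (restrM F I mu pt m)" "restrM F I mu pt m \<in> F"
    using m by (auto simp: restrM_def)
qed

text \<open>A morphism is determined by its values on \<open>\<M>\<close>, since every class is an \<open>\<oplus>\<close> of singletons.\<close>
lemma SMor_smcls: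
  assumes pt: "pt \<in> SMor F I mu" and S: "S \<in> FinM F I mu"
  shows "pt (smcls F I mu S) = ereal (Min (restrM F I mu pt ` S))"
  using FinMD[OF S]
proof (induction S rule: finite_ne_induct)
  case (singleton m)
  then show ?case
    using SMor_smcls_singleton(1)[OF pt] by simp
next
  case (insert m S)
  have S: "S \<in> FinM F I mu" and m: "{m} \<in> FinM F I mu"
    using insert by (simp_all add: FinM_def)
  have "pt (smcls F I mu (insert m S)) = pt (sm_oplus F I mu (smcls F I mu {m}) (smcls F I mu S))"
    using sm_oplus_smcls[OF m S] by simp
  also have "\<dots> = min (pt (smcls F I mu {m})) (pt (smcls F I mu S))"
    using SMorD(3)[OF pt smcls_SM[OF m] smcls_SM[OF S]] .
  finally show ?case
    using insert SMor_smcls_singleton(1)[OF pt, of m] by simp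
qed

lemma restrM_in_Sp:
  assumes pt: "pt \<in> SMor F I mu"
  shows "restrM F I mu pt \<in> Sp F I mu"
  unfolding Sp_def mem_Collect_eq
proof (intro conjI ballI allI impI)
  show "restrM F I mu pt \<in> extensional (Mel F I mu)"
    by (simp add: restrM_def)
next
  fix m :: "'i \<Rightarrow> real^'n"
  assume "m \<in> Mel F I mu"
  then show "restrM F I mu pt m \<in> F"
    by (rule SMor_smcls_singleton(2)[OF pt])
next
  fix m m' :: "'i \<Rightarrow> real^'n"
  assume m: "m \<in> Mel F I mu" and m': "m' \<in> Mel F I mu"
  have "padd_set {m} {m'} = (\<lambda>a. padd I mu a m m') ` I"
    by (auto simp: padd_set_def)
  moreover have "pt (sm_star F I mu (smcls F I mu {m}) (smcls F I mu {m'}))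
      = pt (smcls F I mu {m}) + pt (smcls F I mu {m'})"
    using SMorD(4)[OF pt smcls_SM[OF singleton_FinM[OF m]] smcls_SM[OF singleton_FinM[OF m']]] .
  ultimately show "restrM F I mu pt m + restrM F I mu pt m' = Min ((\<lambda>a. restrM F I mu pt (padd I mu a m m')) ` I)"
    using sm_star_smcls[OF singleton_FinM[OF m] singleton_FinM[OF m']]
      SMor_smcls[OF pt padd_set_FinM[OF singleton_FinM[OF m] singleton_FinM[OF m']]]
      SMor_smcls_singleton(1)[OF pt m] SMor_smcls_singleton(1)[OF pt m']
    by (simp add: image_image)
next
  fix c :: real and m :: "'i \<Rightarrow> real^'n"
  assume c: "c \<in> F" "0 \<le> c" and m: "m \<in> Mel F I mu"
  have "pt (sm_scale F I mu c (smcls F I mu {m})) = tscale c (pt (smcls F I mu {m}))"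
    using SMorD(6)[OF pt c smcls_SM[OF singleton_FinM[OF m]]] .
  then have "ereal (restrM F I mu pt (psmul c m)) = tscale c (ereal (restrM F I mu pt m))"
    using sm_scale_smcls[OF singleton_FinM[OF m] c] SMor_smcls_singleton(1)[OF pt m]
      SMor_smcls_singleton(1)[OF pt psmul_Mel[OF m c]] by simp
  then show "restrM F I mu pt (psmul c m) = c * restrM F I mu pt m"
    by (cases "c = 0") (simp_all add: tscale_def zero_ereal_def)
qed

lemma inj_on_restrM: "inj_on (restrM F I mu) (SMor F I mu)"
proof (rule inj_onI)
  fix pt pt'
  assume pt: "pt \<in> SMor F I mu" and pt': "pt' \<in> SMor F I mu"
    and eq: "restrM F I mu pt = restrM F I mu pt'"
  show "pt = pt'"
  proof
    fix x
    show "pt x = pt' x"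
    proof (cases "x \<in> SM F I mu")
      case True
      then show ?thesis
      proof (cases rule: SM_cases)
        case infinity
        then show ?thesis
          using SMorD(5)[OF pt] SMorD(5)[OF pt'] by simp
      next
        case (smcls S)
        then show ?thesis
          using SMor_smcls[OF pt] SMor_smcls[OF pt'] eq by simp
      qed
    next
      case False
      then show ?thesis
        using SMorD(1)[OF pt] SMorD(1)[OF pt'] by (simp add: extensional_def)
    qed
  qed
qed

text \<open>\<open>SOME\<close> picks a representative of the class; the choice is harmless since \<^const>\<open>min_profile\<close> is a class invariant.\<close>
definition SMor_of_point :: "(('i \<Rightarrow> real^'n) \<Rightarrow> real) \<Rightarrow> ('i \<Rightarrow> real^'n) set set option \<Rightarrow> ereal" where
  "SMor_of_point p = restrict (\<lambda>x. case x of None \<Rightarrow> \<infinity> | Some X \<Rightarrow> ereal (Min (p ` (SOME S. S \<in> X)))) (SM F I mu)"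

lemma SMor_of_point_None: "SMor_of_point p None = \<infinity>"
  by (simp add: SMor_of_point_def SM_def)

lemma SMor_of_point_smcls:
  assumes p: "p \<in> Sp F I mu" and S: "S \<in> FinM F I mu"
  shows "SMor_of_point p (smcls F I mu S) = ereal (Min (p ` S))"
proof -
  define S' where "S' = (SOME S'. S' \<in> SMrel F I mu `` {S})"
  have "S' \<in> SMrel F I mu `` {S}"
    unfolding S'_def using smcls_refl[OF S] by (rule someI)
  then have "min_profile S' p = min_profile S p"
    by (simp add: SMrel_iff)
  then have "Min (p ` S') = Min (p ` S)"
    by (simp add: min_profile_point[OF p])
  then show ?thesis
    using smcls_SM[OF S] by (simp add: SMor_of_point_def smcls_def S'_def)
qed

lemma SMor_of_point_oplus:
  assumes p: "p \<in> Sp F I mu" and x: "x \<in> SM F I mu" and y: "y \<in> SM F I mu"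
  shows "SMor_of_point p (sm_oplus F I mu x y) = min (SMor_of_point p x) (SMor_of_point p y)"
  using x
proof (cases rule: SM_cases)
  case infinity
  then show ?thesis
    by (simp add: SMor_of_point_None)
next
  case (smcls S)
  note S = smcls
  from y show ?thesis
  proof (cases rule: SM_cases)
    case infinity
    then show ?thesis
      by (simp add: SMor_of_point_None)
  next
    case (smcls T)
    have "Min (p ` (S \<union> T)) = min (Min (p ` S)) (Min (p ` T))"
      using FinMD[OF S(1)] FinMD[OF smcls(1)] by (simp add: image_Un Min_Un)
    then show ?thesis
      using S smcls by (simp add: sm_oplus_smcls Un_FinM SMor_of_point_smcls[OF p])
  qed
qed

lemma SMor_of_point_values:
  assumes p: "p \<in> Sp F I mu" and x: "x \<in> SM F I mu"
  shows "SMor_of_point p x \<in> ereal ` F \<union> {\<infinity>}" "x \<noteq> None \<Longrightarrow> SMor_of_point p x \<noteq> \<infinity>"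
proof -
  from x show "SMor_of_point p x \<in> ereal ` F \<union> {\<infinity>}"
    by (cases rule: SM_cases) (simp_all add: SMor_of_point_None SMor_of_point_smcls[OF p] Min_point_in_F[OF p])
  from x show "x \<noteq> None \<Longrightarrow> SMor_of_point p x \<noteq> \<infinity>"
    by (cases rule: SM_cases) (simp_all add: SMor_of_point_smcls[OF p])
qed

lemma SMor_of_point_star:
  assumes p: "p \<in> Sp F I mu" and x: "x \<in> SM F I mu" and y: "y \<in> SM F I mu"
  shows "SMor_of_point p (sm_star F I mu x y) = SMor_of_point p x + SMor_of_point p y"
  using x
proof (cases rule: SM_cases)
  case infinity
  then show ?thesis
    using SMor_of_point_values(1)[OF p y] by (auto simp: SMor_of_point_None)
next
  case (smcls S)
  note S = smcls
  from y show ?thesis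
  proof (cases rule: SM_cases)
    case infinity
    then show ?thesis
      using SMor_of_point_values(1)[OF p x] by (auto simp: SMor_of_point_None)
  next
    case (smcls T)
    then show ?thesis
      using S by (simp add: sm_star_smcls padd_set_FinM SMor_of_point_smcls[OF p] Min_padd_set[OF p])
  qed
qed

lemma SMor_of_point_scale:
  assumes p: "p \<in> Sp F I mu" and c: "c \<in> F" "c \<ge> 0" and x: "x \<in> SM F I mu"
  shows "SMor_of_point p (sm_scale F I mu c x) = tscale c (SMor_of_point p x)"
  using x
proof (cases rule: SM_cases)
  case infinity
  have "SMor_of_point p (smcls F I mu {zeroM I}) = 0"
    using SMor_of_point_smcls[OF p singleton_FinM[OF zeroM_Mel]] point_zero[OF p] by (simp add: zero_ereal_def)
  then show ?thesis
    using infinity c(2) by (simp add: sm_scale_def tscale_def SMor_of_point_None)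
next
  case (smcls S)
  then show ?thesis
    using c by (simp add: sm_scale_smcls psmul_image_FinM SMor_of_point_smcls[OF p] Min_psmul_image[OF p]
        tscale_def zero_ereal_def)
qed

lemma SMor_of_point_in_SMor:
  assumes p: "p \<in> Sp F I mu"
  shows "SMor_of_point p \<in> SMor F I mu"
  unfolding SMor_def mem_Collect_eq
proof (intro conjI ballI allI impI)
  show "SMor_of_point p \<in> extensional (SM F I mu)"
    by (simp add: SMor_of_point_def)
  show "SMor_of_point p None = \<infinity>"
    by (rule SMor_of_point_None)
  show "SMor_of_point p (smcls F I mu {zeroM I}) = 0"
    using SMor_of_point_smcls[OF p singleton_FinM[OF zeroM_Mel]] point_zero[OF p] by (simp add: zero_ereal_def)
qed (use SMor_of_point_values[OF p] SMor_of_point_oplus[OF p] SMor_of_point_star[OF p]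
      SMor_of_point_scale[OF p] in auto)

lemma restrM_SMor_of_point:
  assumes p: "p \<in> Sp F I mu"
  shows "restrM F I mu (SMor_of_point p) = p"
proof
  fix m :: "'i \<Rightarrow> real^'n"
  show "restrM F I mu (SMor_of_point p) m = p m"
  proof (cases "m \<in> Mel F I mu")
    case True
    then show ?thesis
      using SMor_of_point_smcls[OF p singleton_FinM[OF True]] by (simp add: restrM_def)
  next
    case False
    then show ?thesis
      using p by (simp add: restrM_def Sp_def extensional_def)
  qed
qed

lemma bij_betw_restrM: "bij_betw (restrM F I mu) (SMor F I mu) (Sp F I mu)"
proof (rule bij_betw_imageI[OF inj_on_restrM])
  show "restrM F I mu ` SMor F I mu = Sp F I mu"
  proof (intro equalityI subsetI)
    fix p
    assume "p \<in> restrM F I mu ` SMor F I mu"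
    then show "p \<in> Sp F I mu"
      using restrM_in_Sp by auto
  next
    fix p
    assume "p \<in> Sp F I mu"
    then show "p \<in> restrM F I mu ` SMor F I mu"
      using SMor_of_point_in_SMor restrM_SMor_of_point by (metis image_eqI)
  qed
qed

end

theorem mainTheorem7:
  fixes F :: "real set" and I :: "'i set" and mu :: "'i \<Rightarrow> 'i \<Rightarrow> real^'n \<Rightarrow> real^'n"
  assumes "subring_of_reals F"
    and "polyptych_lattice F I mu"
    and "finite I"
  shows "bij_betw (restrM F I mu) (SMor F I mu) (Sp F I mu)
    \<and> (\<forall>pt\<in>SMor F I mu.
          pt None = \<infinity>
        \<and> (\<forall>S\<in>FinM F I mu. pt (smcls F I mu S) = ereal (Min (restrM F I mu pt ` S))))"
proof -
  interpret finite_polyptych_lattice F I mu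
    using assms by unfold_locales
  show ?thesis
    using bij_betw_restrM SMorD(5) SMor_smcls by blast
qed

end
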